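(* For $\tau$ in the upper half plane, with $\eta=\eta(\tau)$: $$\theta_2(0|\tfrac{2\tau}{3})\theta_3(0|6\tau)-\theta_3(0|\tfrac{2\tau}{3})\theta_2(0|6\tau)=2\eta^2,$$ $$\theta_4(0|\tfrac{3\tau}{2})\theta_3(0|\tfrac{\tau}{6})-\theta_3(0|\tfrac{3\tau}{2})\theta_4(0|\tfrac{\tau}{6})=4\eta^2.$$
   Context: With $q^s=e^{2\pi i s\tau}$: $\theta_2(0|\tau)=\sum_{n\in\mathbb{Z}} q^{(n+1/2)^2/2}$, $\theta_3(0|\tau)=\sum_{n} q^{n^2/2}$, $\theta_4(0|\tau)=\sum_{n}(-1)^n q^{n^2/2}$; $\eta(\tau)=q^{1/24}\prod_{n\ge1}(1-q^n)$. *)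

theory Defs
  imports "HOL-Analysis.Analysis"
begin

definition qpow :: "complex \<Rightarrow> real \<Rightarrow> complex" where
  "qpow \<tau> s = exp (2 * pi * \<i> * of_real s * \<tau>)"

definition theta2 :: "complex \<Rightarrow> complex" where
  "theta2 \<tau> = (\<Sum>\<^sub>\<infinity>n::int. qpow \<tau> ((of_int n + 1/2)^2 / 2))"

definition theta3 :: "complex \<Rightarrow> complex" where
  "theta3 \<tau> = (\<Sum>\<^sub>\<infinity>n::int. qpow \<tau> ((of_int n)^2 / 2))"

definition theta4 :: "complex \<Rightarrow> complex" where
  "theta4 \<tau> = (\<Sum>\<^sub>\<infinity>n::int. (-1) ^ nat \<bar>n\<bar> * qpow \<tau> ((of_int n)^2 / 2))"

definition dedekind_eta :: "complex \<Rightarrow> complex" where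
  "dedekind_eta \<tau> = qpow \<tau> (1/24) * (\<Prod>n. (1 - qpow \<tau> (real (Suc n))))"

end

theory Submission
  imports Defs
begin

text \<open>
  At the rescaled arguments every theta series is a sum of \<open>q^(x^2/12)\<close> over an
  arithmetic progression of integers \<open>x\<close>, so each product of two of them is a sum over a
  sublattice of \<open>\<int>\<^sup>2\<close>. Both differences are multiples of the lattice sum
  \<open>S = \<Sum> c(u,v) q^((u^2+v^2)/12)\<close> with \<open>c(u,v) = (-1)^v\<close> if \<open>3 | v\<close> and \<open>u + v\<close> is odd,
  \<open>c(u,v) = 0\<close> otherwise: the first difference is \<open>S\<close> and the second is \<open>2 S\<close>.

  The part of \<open>S\<close> with \<open>3 | u\<close> cancels under \<open>(u,v) \<mapsto> (v,u)\<close>. By Euler's pentagonal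
  number theorem \<open>\<eta> = \<Sum>\<^sub>k (-1)^k q^((6k+1)^2/24)\<close>, and \<open>(j,k) \<mapsto> (3(j+k)+1, 3(j-k))\<close>
  identifies the double series for \<open>\<eta>\<^sup>2\<close> termwise with the part of \<open>S\<close> with
  \<open>u \<equiv> 1 (mod 3)\<close>; the part with \<open>u \<equiv> 2 (mod 3)\<close> is its mirror image under \<open>u \<mapsto> -u\<close>.
  Hence \<open>S = 2 \<eta>\<^sup>2\<close>. Euler's theorem itself follows from Shanks' finite identity, whose
  \<open>k = 0\<close> term is the partial Euler product while the remaining terms are \<open>O(n |q|^n)\<close>.
\<close>

lemma qpow_add: "qpow t (a + b) = qpow t a * qpow t b"
  unfolding qpow_def by (simp add: exp_add[symmetric] algebra_simps)

lemma norm_qpow: "norm (qpow t s) = exp (- 2 * pi * s * Im t)"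
  unfolding qpow_def by simp

lemma qpow_of_real_mult: "qpow (of_real c * t) s = qpow t (c * s)"
  unfolding qpow_def by (simp add: algebra_simps)

lemma qpow_of_nat: "qpow t (real n) = qpow t 1 ^ n"
  unfolding qpow_def by (simp add: exp_of_nat_mult[symmetric] algebra_simps)

section \<open>Sums over the integers and the integer lattice\<close>

lemma summable_on_geometric_int:
  fixes r :: real
  assumes "0 \<le> r" "r < 1"
  shows "(\<lambda>n::int. r ^ nat \<bar>n\<bar>) summable_on UNIV"
proof -
  have UNIV_eq: "(UNIV :: int set) = range int \<union> range (\<lambda>n. - int (Suc n))"
  proof -
    have "x \<in> range int \<union> range (\<lambda>n. - int (Suc n))" for x :: int
    proof (cases "x \<ge> 0")
      case True
      then have "x = int (nat x)" by simp
      then show ?thesis by blast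
    next
      case False
      then have "x = - int (Suc (nat (- x - 1)))" by simp
      then show ?thesis by blast
    qed
    then show ?thesis by blast
  qed
  have "(\<lambda>n. r ^ n) summable_on UNIV"
    using assms by (intro norm_summable_imp_summable_on) (simp add: summable_geometric)
  then have nonneg: "(\<lambda>n::int. r ^ nat \<bar>n\<bar>) summable_on range int"
    by (subst summable_on_reindex) (auto simp: o_def)
  have "(\<lambda>n. r * r ^ n) summable_on UNIV"
    using \<open>(\<lambda>n. r ^ n) summable_on UNIV\<close> by (rule summable_on_cmult_right)
  then have neg: "(\<lambda>n::int. r ^ nat \<bar>n\<bar>) summable_on range (\<lambda>n. - int (Suc n))"
    by (subst summable_on_reindex) (auto simp: o_def inj_on_def nat_add_distrib)
  show ?thesis
    unfolding UNIV_eq by (rule summable_on_Un_disjoint[OF nonneg neg]) auto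
qed

lemma exp_neg_mult_square_le:
  fixes c b :: real and n :: int
  assumes "c > 0"
  shows "exp (- c * (n + b)\<^sup>2) \<le> exp (c * (1/4 + \<bar>b\<bar>)) * exp (- c) ^ nat \<bar>n\<bar>"
proof -
  have "(\<bar>n + b\<bar> - 1/2)\<^sup>2 \<ge> 0" by simp
  then have "(n + b)\<^sup>2 \<ge> \<bar>n + b\<bar> - 1/4"
    by (simp add: power2_eq_square algebra_simps abs_mult_self_eq)
  then have "\<bar>n\<bar> \<le> \<bar>b\<bar> + 1/4 + (n + b)\<^sup>2" by linarith
  then have "c * \<bar>n\<bar> \<le> c * (\<bar>b\<bar> + 1/4 + (n + b)\<^sup>2)"
    using assms by (intro mult_left_mono) auto
  moreover have "exp (- c) ^ nat \<bar>n\<bar> = exp (- c * \<bar>n\<bar>)"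
    by (simp add: exp_of_nat_mult[symmetric])
  ultimately show ?thesis
    by (simp add: exp_add[symmetric] algebra_simps)
qed

lemma qpow_gaussian_summable:
  assumes "Im t > 0" "a > 0"
  shows "(\<lambda>n::int. qpow t (a * (of_int n + b)\<^sup>2)) summable_on UNIV"
proof -
  define c where "c = 2 * pi * a * Im t"
  have "c > 0" using assms by (simp add: c_def)
  have geometric: "(\<lambda>n::int. exp (c * (1/4 + \<bar>b\<bar>)) * exp (- c) ^ nat \<bar>n\<bar>) summable_on UNIV"
    by (intro summable_on_cmult_right summable_on_geometric_int) (use \<open>c > 0\<close> in auto)
  have norm_eq: "norm (qpow t (a * (of_int n + b)\<^sup>2)) = exp (- c * (n + b)\<^sup>2)" for n :: int
    by (simp add: norm_qpow c_def algebra_simps)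
  have "(\<lambda>n::int. norm (qpow t (a * (of_int n + b)\<^sup>2))) summable_on UNIV"
    by (rule summable_on_comparison_test[OF geometric])
       (use exp_neg_mult_square_le[OF \<open>c > 0\<close>] in \<open>auto simp: norm_eq\<close>)
  then show ?thesis using summable_on_iff_abs_summable_on_complex by blast
qed

lemma summable_on_bounded_mult:
  fixes f s :: "'a \<Rightarrow> complex"
  assumes "f summable_on A" "\<And>x. norm (s x) \<le> B"
  shows "(\<lambda>x. s x * f x) summable_on A"
proof -
  have "(\<lambda>x. norm (f x)) summable_on A"
    using assms(1) summable_on_iff_abs_summable_on_complex by blast
  then have "(\<lambda>x. B * norm (f x)) summable_on A" by (rule summable_on_cmult_right)
  then have "(\<lambda>x. norm (s x * f x)) summable_on A"
    by (rule summable_on_comparison_test) (auto simp: norm_mult intro: mult_right_mono assms(2))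
  then show ?thesis using summable_on_iff_abs_summable_on_complex by blast
qed

lemma has_sum_diff:
  fixes f g :: "'a \<Rightarrow> 'b::topological_ab_group_add"
  assumes "(f has_sum a) A" "(g has_sum b) A"
  shows "((\<lambda>x. f x - g x) has_sum (a - b)) A"
proof -
  have "((\<lambda>x. - g x) has_sum - b) A" using assms(2) by (simp add: has_sum_uminus)
  from has_sum_add[OF assms(1) this] show ?thesis by simp
qed

lemma has_sum_product:
  fixes f :: "'a \<Rightarrow> complex" and g :: "'b \<Rightarrow> complex"
  assumes "(f has_sum a) A" "(g has_sum b) B"
  shows "((\<lambda>(x, y). f x * g y) has_sum (a * b)) (A \<times> B)"
proof -
  have f: "f summable_on A" and g: "g summable_on B"
    using assms summable_on_def by blast+
  have "(\<lambda>x. norm (f x)) summable_on A" "(\<lambda>y. norm (g y)) summable_on B"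
    using f g summable_on_iff_abs_summable_on_complex by blast+
  then have "(\<lambda>p. norm ((\<lambda>(x, y). f x * g y) p)) summable_on A \<times> B"
    by (intro Infinite_Sum.abs_summable_on_Sigma_iff[where B = "\<lambda>_. B", THEN iffD2])
       (auto simp: norm_mult infsum_cmult_right' abs_mult infsum_nonneg
             intro!: summable_on_cmult_right summable_on_cmult_left)
  then have summable: "(\<lambda>(x, y). f x * g y) summable_on A \<times> B"
    using summable_on_iff_abs_summable_on_complex by blast
  have "infsum (\<lambda>(x, y). f x * g y) (A \<times> B) = (\<Sum>\<^sub>\<infinity>x\<in>A. \<Sum>\<^sub>\<infinity>y\<in>B. f x * g y)"
    using infsum_Sigma'_banach[OF summable] by simp
  also have "\<dots> = a * b"
    using assms by (simp add: infsum_cmult_right' infsum_cmult_left' infsumI)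
  finally show ?thesis using summable by (metis has_sum_infsum)
qed

lemma has_sum_extend_outside_range:
  fixes g :: "'a \<Rightarrow> 'b::{comm_monoid_add, topological_space}"
  assumes "inj h" "((\<lambda>x. g (h x)) has_sum s) UNIV"
  shows "((\<lambda>z. if z \<in> range h then g z else 0) has_sum s) UNIV"
proof -
  have "(g has_sum s) (range h)"
    using assms has_sum_reindex[of h UNIV g s] by (simp add: o_def)
  then show ?thesis by (subst (asm) has_sum_cong_neutral[where T = UNIV]) auto
qed

lemma has_sum_product_reindex:
  fixes f :: "'a \<Rightarrow> complex" and g :: "'b \<Rightarrow> complex"
  assumes "(f has_sum a) UNIV" "(g has_sum b) UNIV" "inj h"
    and "\<And>x y. f x * g y = F (h (x, y))"
  shows "((\<lambda>z. if z \<in> range h then F z else 0) has_sum a * b) UNIV"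
proof -
  have "((\<lambda>(x, y). f x * g y) has_sum a * b) (UNIV \<times> UNIV)"
    by (rule has_sum_product[OF assms(1,2)])
  moreover have "(\<lambda>(x, y). f x * g y) = (\<lambda>p. F (h p))"
    using assms(4) by auto
  ultimately show ?thesis
    using has_sum_extend_outside_range[OF assms(3)] by simp
qed

lemma tendsto_infsum_symmetric_partial_sums:
  fixes f :: "int \<Rightarrow> 'a::{comm_monoid_add, t2_space}"
  assumes "f summable_on UNIV"
  shows "(\<lambda>n. \<Sum>k\<in>{- int n..int n}. f k) \<longlonglongrightarrow> infsum f UNIV"
proof -
  have subsets: "filterlim (\<lambda>n. {- int n..int n}) (finite_subsets_at_top UNIV) sequentially"
    unfolding filterlim_finite_subsets_at_top
  proof (intro allI impI)
    fix X :: "int set"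
    assume "finite X \<and> X \<subseteq> UNIV"
    then obtain M where M: "abs ` X \<subseteq> {..M}" using finite_int_iff_bounded_le by blast
    show "\<forall>\<^sub>F n in sequentially. finite {- int n..int n} \<and> X \<subseteq> {- int n..int n}
            \<and> {- int n..int n} \<subseteq> UNIV"
      using eventually_ge_at_top[of "nat M"] by eventually_elim (use M in force)
  qed
  have "(sum f \<longlongrightarrow> infsum f UNIV) (finite_subsets_at_top UNIV)"
    using has_sum_infsum[OF assms] unfolding has_sum_def .
  from filterlim_compose[OF this subsets] show ?thesis by (simp add: o_def)
qed

lemma sum_int_symmetric_interval:
  fixes f :: "int \<Rightarrow> 'a::comm_monoid_add"
  shows "(\<Sum>k\<in>{- int n..int n}. f k) = (\<Sum>k\<le>n. f (int k)) + (\<Sum>k\<in>{1..n}. f (- int k))"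
proof (induction n)
  case 0
  then show ?case by simp
next
  case (Suc n)
  have "{- int (Suc n)..int (Suc n)} = insert (int (Suc n)) (insert (- int (Suc n)) {- int n..int n})"
    by auto
  then have "(\<Sum>k\<in>{- int (Suc n)..int (Suc n)}. f k)
      = f (int (Suc n)) + (f (- int (Suc n)) + (\<Sum>k\<in>{- int n..int n}. f k))"
    by simp
  then show ?case using Suc.IH by (simp add: algebra_simps)
qed

lemma range_affine_pair:
  fixes a b c d :: int
  assumes "0 \<le> b" "b < a" "0 \<le> d" "d < c"
  shows "range (\<lambda>(x, y). (a * x + b, c * y + d)) = {z. fst z mod a = b \<and> snd z mod c = d}"
proof (intro equalityI subsetI)
  fix z
  assume "z \<in> range (\<lambda>(x, y). (a * x + b, c * y + d))"
  then obtain x y where z: "z = (a * x + b, c * y + d)"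
    by (auto simp only: image_iff split: prod.splits)
  have "(a * x + b) mod a = b" "(c * y + d) mod c = d"
    using assms by (simp_all only: mod_mult_self4 mod_pos_pos_trivial)
  then show "z \<in> {z. fst z mod a = b \<and> snd z mod c = d}" by (simp add: z)
next
  fix z
  assume "z \<in> {z. fst z mod a = b \<and> snd z mod c = d}"
  then have "z = (\<lambda>(x, y). (a * x + b, c * y + d)) (fst z div a, snd z div c)"
    using mult_div_mod_eq[of a "fst z"] mult_div_mod_eq[of c "snd z"] by (simp add: prod_eq_iff)
  then show "z \<in> range (\<lambda>(x, y). (a * x + b, c * y + d))" by (rule range_eqI)
qed

lemma inj_affine_pair:
  fixes a b c d :: int
  assumes "a \<noteq> 0" "c \<noteq> 0"
  shows "inj (\<lambda>(x, y). (a * x + b, c * y + d))"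
  using assms by (auto simp: inj_def)

section \<open>Euler's pentagonal number theorem\<close>

definition triangular :: "nat \<Rightarrow> nat" where
  "triangular k = k * (k + 1) div 2"

lemma triangular_0 [simp]: "triangular 0 = 0"
  by (simp add: triangular_def)

lemma triangular_Suc: "triangular (Suc k) = triangular k + Suc k"
  unfolding triangular_def by (induction k) auto

lemma of_nat_triangular: "real (triangular k) = real k * (real k + 1) / 2"
  by (induction k) (simp_all add: triangular_Suc field_simps)

definition qprod :: "'a::comm_ring_1 \<Rightarrow> nat \<Rightarrow> nat \<Rightarrow> 'a" where
  "qprod q k n = (\<Prod>i\<in>{k..<n}. 1 - q ^ Suc i)"

lemma qprod_self [simp]: "qprod q n n = 1"
  unfolding qprod_def by simp

lemma qprod_Suc_left: "k < n \<Longrightarrow> qprod q k n = (1 - q ^ Suc k) * qprod q (Suc k) n"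
  unfolding qprod_def by (simp add: prod.atLeast_Suc_lessThan)

lemma qprod_Suc_right: "k \<le> n \<Longrightarrow> qprod q k (Suc n) = qprod q k n * (1 - q ^ Suc n)"
  unfolding qprod_def by (simp add: prod.atLeastLessThan_Suc)

definition shanks_term :: "'a::comm_ring_1 \<Rightarrow> nat \<Rightarrow> nat \<Rightarrow> 'a" where
  "shanks_term q n k = (-1) ^ k * qprod q k n * q ^ (n * k + triangular k)"

lemma shanks_telescope:
  fixes q :: "'a::comm_ring_1"
  assumes "j \<le> m"
  shows "(\<Sum>k\<le>j. shanks_term q m k * (q ^ k * (1 - q ^ Suc m) - 1))
           = (-1) ^ Suc j * qprod q j m * q ^ (m * Suc j + triangular (Suc j))"
  using assms
proof (induction j)
  case 0
  then show ?case by (simp add: shanks_term_def triangular_def algebra_simps)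
next
  case (Suc j)
  have qprod_j: "qprod q j m = (1 - q ^ Suc j) * qprod q (Suc j) m"
    using Suc.prems by (intro qprod_Suc_left) simp
  have exponent: "m * Suc (Suc j) + triangular (Suc (Suc j))
                    = (m * Suc j + triangular (Suc j)) + Suc j + Suc m"
    by (simp add: triangular_Suc)
  have "(\<Sum>k\<le>Suc j. shanks_term q m k * (q ^ k * (1 - q ^ Suc m) - 1))
      = (-1) ^ Suc j * qprod q j m * q ^ (m * Suc j + triangular (Suc j))
        + shanks_term q m (Suc j) * (q ^ Suc j * (1 - q ^ Suc m) - 1)"
    using Suc by simp
  also have "\<dots> = (-1) ^ Suc (Suc j) * qprod q (Suc j) m
                   * q ^ (m * Suc (Suc j) + triangular (Suc (Suc j)))"
    unfolding qprod_j shanks_term_def exponent power_add by (simp add: algebra_simps)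
  finally show ?case .
qed

text \<open>The exponents \<open>k * k + triangular k\<close> and \<open>k * k + triangular k - k\<close> are the
  pentagonal numbers \<open>k(3k+1)/2\<close> and \<open>k(3k-1)/2\<close>.\<close>

lemma shanks_identity:
  fixes q :: "'a::comm_ring_1"
  shows "(\<Sum>k\<le>n. shanks_term q n k)
           = (\<Sum>k\<le>n. (-1) ^ k * q ^ (k * k + triangular k))
             + (\<Sum>k\<in>{1..n}. (-1) ^ k * q ^ (k * k + triangular k - k))"
proof (induction n)
  case 0
  then show ?case by (simp add: shanks_term_def)
next
  case (Suc m)
  have step: "shanks_term q (Suc m) k = shanks_term q m k * (q ^ k * (1 - q ^ Suc m) - 1)
                                       + shanks_term q m k" if "k \<le> m" for k
    using that unfolding shanks_term_def by (simp add: qprod_Suc_right power_add algebra_simps)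
  have "(\<Sum>k\<le>Suc m. shanks_term q (Suc m) k)
      = (\<Sum>k\<le>m. shanks_term q m k * (q ^ k * (1 - q ^ Suc m) - 1))
        + (\<Sum>k\<le>m. shanks_term q m k) + shanks_term q (Suc m) (Suc m)"
    by (simp add: step sum.distrib)
  also have "(\<Sum>k\<le>m. shanks_term q m k * (q ^ k * (1 - q ^ Suc m) - 1))
               = (-1) ^ Suc m * q ^ (Suc m * Suc m + triangular (Suc m) - Suc m)"
  proof -
    have "m * Suc m + triangular (Suc m) = Suc m * Suc m + triangular (Suc m) - Suc m" by simp
    then show ?thesis using shanks_telescope[of m m q] by (simp add: ac_simps)
  qed
  also have "shanks_term q (Suc m) (Suc m) = (-1) ^ Suc m * q ^ (Suc m * Suc m + triangular (Suc m))"
    by (simp add: shanks_term_def)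
  finally show ?case using Suc.IH by (simp add: algebra_simps)
qed

lemma norm_qprod_le:
  fixes q :: complex
  assumes "norm q < 1"
  shows "norm (qprod q k n) \<le> exp (1 / (1 - norm q))"
proof -
  define r where "r = norm q"
  have r: "0 \<le> r" "r < 1" using assms by (auto simp: r_def)
  have "norm (qprod q k n) = (\<Prod>i\<in>{k..<n}. norm (1 - q ^ Suc i))"
    unfolding qprod_def by (simp add: prod_norm)
  also have "\<dots> \<le> (\<Prod>i\<in>{k..<n}. exp (r ^ Suc i))"
  proof (rule prod_mono)
    fix i
    have "norm (1 - q ^ Suc i) \<le> 1 + r ^ Suc i"
      using norm_triangle_ineq4[of 1 "q ^ Suc i"] by (simp add: r_def norm_power norm_mult)
    also have "\<dots> \<le> exp (r ^ Suc i)" by (rule exp_ge_add_one_self[THEN order.trans]) simp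
    finally show "0 \<le> norm (1 - q ^ Suc i) \<and> norm (1 - q ^ Suc i) \<le> exp (r ^ Suc i)" by simp
  qed
  also have "\<dots> = exp (\<Sum>i\<in>{k..<n}. r ^ Suc i)" by (simp add: exp_sum)
  also have "(\<Sum>i\<in>{k..<n}. r ^ Suc i) \<le> (\<Sum>i<n. r ^ i)"
  proof -
    have "(\<Sum>i\<in>{k..<n}. r ^ Suc i) \<le> (\<Sum>i<n. r ^ Suc i)"
      by (rule sum_mono2) (use r in auto)
    also have "\<dots> \<le> (\<Sum>i<n. r ^ i)"
      by (rule sum_mono) (use r in \<open>simp add: mult_left_le_one_le\<close>)
    finally show ?thesis .
  qed
  also have "(\<Sum>i<n. r ^ i) = (1 - r ^ n) / (1 - r)"
    using r by (simp add: sum_gp_strict)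
  also have "\<dots> \<le> 1 / (1 - r)"
    using r by (intro divide_right_mono) auto
  finally show ?thesis by (simp add: r_def)
qed

lemma shanks_tail_tendsto_zero:
  fixes q :: complex
  assumes "norm q < 1"
  shows "(\<lambda>n. \<Sum>k\<in>{1..n}. shanks_term q n k) \<longlonglongrightarrow> 0"
proof -
  define r where "r = norm q"
  define C where "C = exp (1 / (1 - r))"
  have r: "0 \<le> r" "r < 1" using assms by (auto simp: r_def)
  have term_bound: "norm (shanks_term q n k) \<le> C * r ^ n" if "k \<in> {1..n}" for n k
  proof -
    have "n \<le> n * k + triangular k" using that by (simp add: trans_le_add1)
    then have "r ^ (n * k + triangular k) \<le> r ^ n" using r by (intro power_decreasing) auto
    moreover have "norm (qprod q k n) \<le> C"
      unfolding C_def r_def by (rule norm_qprod_le[OF assms])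
    ultimately have "norm (qprod q k n) * r ^ (n * k + triangular k) \<le> C * r ^ n"
      using r by (intro mult_mono) (auto simp: C_def)
    then show ?thesis by (simp add: shanks_term_def norm_mult norm_power r_def)
  qed
  have bound: "norm (\<Sum>k\<in>{1..n}. shanks_term q n k) \<le> C * (real n * r ^ n)" for n
  proof -
    have "norm (\<Sum>k\<in>{1..n}. shanks_term q n k) \<le> (\<Sum>k\<in>{1..n}. norm (shanks_term q n k))"
      by (rule norm_sum)
    also have "\<dots> \<le> (\<Sum>k\<in>{1..n}. C * r ^ n)"
      by (rule sum_mono) (rule term_bound)
    also have "\<dots> = C * (real n * r ^ n)" by simp
    finally show ?thesis .
  qed
  have "(\<lambda>n. real n * r ^ n) \<longlonglongrightarrow> 0"
    using powser_times_n_limit_0[of r] r by simp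
  then have "(\<lambda>n. C * (real n * r ^ n)) \<longlonglongrightarrow> 0" by (rule tendsto_mult_right_zero)
  then show ?thesis by (rule Lim_null_comparison[rotated]) (use bound in auto)
qed

lemma qprod_tendsto_prodinf:
  fixes q :: complex
  assumes "norm q < 1"
  shows "(\<lambda>n. qprod q 0 n) \<longlonglongrightarrow> (\<Prod>i. 1 - q ^ Suc i)"
proof -
  have "summable (\<lambda>i. norm q * norm q ^ i)"
    using assms by (intro summable_mult summable_geometric) auto
  then have "summable (\<lambda>i. norm ((1 - q ^ Suc i) - 1))" by (simp add: norm_power norm_mult)
  then have "convergent_prod (\<lambda>i. 1 - q ^ Suc i)"
    by (intro abs_convergent_prod_imp_convergent_prod summable_imp_abs_convergent_prod)
  then have "(\<lambda>n. \<Prod>i<n. 1 - q ^ Suc i) \<longlonglongrightarrow> (\<Prod>i. 1 - q ^ Suc i)"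
    using convergent_prod_LIMSEQ LIMSEQ_lessThan_iff_atMost by blast
  then show ?thesis by (simp add: qprod_def atLeast0LessThan)
qed

lemma euler_pentagonal_partial_sums:
  fixes q :: complex
  assumes "norm q < 1"
  shows "(\<lambda>n. (\<Sum>k\<le>n. (-1) ^ k * q ^ (k * k + triangular k))
              + (\<Sum>k\<in>{1..n}. (-1) ^ k * q ^ (k * k + triangular k - k)))
           \<longlonglongrightarrow> (\<Prod>i. 1 - q ^ Suc i)"
proof -
  have split: "(\<Sum>k\<le>n. shanks_term q n k) = qprod q 0 n + (\<Sum>k\<in>{1..n}. shanks_term q n k)"
    for n
  proof -
    have "{..n} = insert 0 {1..n}" by auto
    then show ?thesis by (simp add: shanks_term_def)
  qed
  have "(\<lambda>n. \<Sum>k\<le>n. shanks_term q n k) \<longlonglongrightarrow> (\<Prod>i. 1 - q ^ Suc i) + 0"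
    unfolding split using assms by (intro tendsto_add qprod_tendsto_prodinf shanks_tail_tendsto_zero)
  then show ?thesis unfolding shanks_identity by simp
qed

definition alt_sign :: "int \<Rightarrow> complex" where
  "alt_sign k = (if even k then 1 else -1)"

lemma alt_sign_of_nat: "alt_sign (int k) = (-1) ^ k"
  by (simp add: alt_sign_def minus_one_power_iff)

lemma alt_sign_uminus [simp]: "alt_sign (- k) = alt_sign k"
  by (simp add: alt_sign_def)

lemma norm_alt_sign [simp]: "norm (alt_sign k) = 1"
  by (simp add: alt_sign_def)

lemma minus_one_power_nat_abs: "(-1) ^ nat \<bar>k\<bar> = alt_sign k"
  by (simp add: alt_sign_def minus_one_power_iff even_nat_iff)

lemma pentagonal_symmetric_sum_qpow:
  "(\<Sum>k\<le>n. (-1) ^ k * qpow t 1 ^ (k * k + triangular k))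
     + (\<Sum>k\<in>{1..n}. (-1) ^ k * qpow t 1 ^ (k * k + triangular k - k))
   = (\<Sum>k\<in>{- int n..int n}. alt_sign k * qpow t (of_int k * (3 * of_int k + 1) / 2))"
proof -
  have "(-1) ^ k * qpow t 1 ^ (k * k + triangular k)
          = alt_sign (int k) * qpow t (of_int (int k) * (3 * of_int (int k) + 1) / 2)" for k
  proof -
    have "real (k * k + triangular k) = of_int (int k) * (3 * of_int (int k) + 1) / 2"
      by (simp add: of_nat_triangular field_simps)
    then show ?thesis by (simp only: qpow_of_nat[symmetric] alt_sign_of_nat)
  qed
  moreover have "(-1) ^ k * qpow t 1 ^ (k * k + triangular k - k)
          = alt_sign (- int k) * qpow t (of_int (- int k) * (3 * of_int (- int k) + 1) / 2)" for k
  proof -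
    have "k \<le> k * k + triangular k" by (cases k) auto
    then have "real (k * k + triangular k - k)
                 = of_int (- int k) * (3 * of_int (- int k) + 1) / 2"
      by (simp add: of_nat_diff of_nat_triangular field_simps)
    then show ?thesis by (simp only: qpow_of_nat[symmetric] alt_sign_of_nat alt_sign_uminus)
  qed
  ultimately show ?thesis unfolding sum_int_symmetric_interval by simp
qed

lemma dedekind_eta_pentagonal:
  assumes "Im t > 0"
  shows "((\<lambda>k::int. alt_sign k * qpow t ((6 * of_int k + 1)\<^sup>2 / 24)) has_sum dedekind_eta t) UNIV"
proof -
  define F where "F k = alt_sign k * qpow t (of_int k * (3 * of_int k + 1) / 2)" for k :: int
  have norm_q: "norm (qpow t 1) < 1" using assms by (simp add: norm_qpow)
  have exponent: "of_int k * (3 * of_int k + 1) / 2 = - 1/24 + 3/2 * (of_int k + 1/6 :: real)\<^sup>2"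
    for k :: int
    by (simp add: power2_eq_square field_simps)
  have F_eq: "F = (\<lambda>k. (alt_sign k * qpow t (- 1/24)) * qpow t (3/2 * (of_int k + 1/6)\<^sup>2))"
    by (rule ext) (simp only: F_def exponent qpow_add mult.assoc)
  have "F summable_on UNIV"
    unfolding F_eq
    by (rule summable_on_bounded_mult[OF qpow_gaussian_summable[OF assms],
          where B = "norm (qpow t (- 1/24))"]) (simp_all add: norm_mult)
  then have "(\<lambda>n. \<Sum>k\<in>{- int n..int n}. F k) \<longlonglongrightarrow> infsum F UNIV"
    by (rule tendsto_infsum_symmetric_partial_sums)
  moreover have "(\<lambda>n. \<Sum>k\<in>{- int n..int n}. F k) \<longlonglongrightarrow> (\<Prod>i. 1 - qpow t 1 ^ Suc i)"
    using euler_pentagonal_partial_sums[OF norm_q]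
    unfolding F_def pentagonal_symmetric_sum_qpow .
  ultimately have "infsum F UNIV = (\<Prod>i. 1 - qpow t 1 ^ Suc i)"
    by (rule LIMSEQ_unique)
  then have "(F has_sum (\<Prod>i. 1 - qpow t 1 ^ Suc i)) UNIV"
    using has_sum_infsum[OF \<open>F summable_on UNIV\<close>] by simp
  then have "((\<lambda>k. qpow t (1/24) * F k) has_sum dedekind_eta t) UNIV"
    unfolding dedekind_eta_def qpow_of_nat by (rule has_sum_cmult_right)
  moreover have "qpow t (1/24) * F k = alt_sign k * qpow t ((6 * of_int k + 1)\<^sup>2 / 24)" for k
  proof -
    have "(6 * of_int k + 1)\<^sup>2 / 24 = 1/24 + (of_int k * (3 * of_int k + 1) / 2 :: real)"
      by (simp add: power2_eq_square field_simps)
    then have "qpow t ((6 * of_int k + 1)\<^sup>2 / 24)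
                 = qpow t (1/24) * qpow t (of_int k * (3 * of_int k + 1) / 2)"
      by (simp only: qpow_add)
    then show ?thesis by (simp add: F_def)
  qed
  ultimately show ?thesis by simp
qed

section \<open>Theta series as lattice sums\<close>

definition gauss_term :: "complex \<Rightarrow> int \<Rightarrow> complex" where
  "gauss_term t x = qpow t (of_int x ^ 2 / 12)"

lemma gauss_term_uminus [simp]: "gauss_term t (- x) = gauss_term t x"
  by (simp add: gauss_term_def)

lemma summable_gauss_term:
  assumes "Im t > 0" "a \<noteq> 0"
  shows "(\<lambda>n. gauss_term t (a * n + b)) summable_on UNIV"
proof -
  have exponent: "of_int (a * n + b) ^ 2 / 12
                    = of_int a ^ 2 / 12 * (of_int n + of_int b / of_int a :: real)\<^sup>2" for n
    using assms(2) by (simp add: power2_eq_square field_simps)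
  show ?thesis
    unfolding gauss_term_def exponent by (rule qpow_gaussian_summable) (use assms in auto)
qed

lemma has_sum_gauss_term:
  assumes "Im t > 0" "a \<noteq> 0"
  shows "((\<lambda>n. gauss_term t (a * n + b)) has_sum (\<Sum>\<^sub>\<infinity>n. gauss_term t (a * n + b))) UNIV"
  using summable_gauss_term[OF assms] by simp

lemma summable_signed_gauss_term:
  assumes "Im t > 0" "a \<noteq> 0"
  shows "(\<lambda>n. alt_sign n * gauss_term t (a * n)) summable_on UNIV"
  using summable_on_bounded_mult[OF summable_gauss_term[OF assms, of 0], where B = 1] by simp

lemma theta2_rescale:
  assumes "6 * s = of_int (2 * a) ^ 2 * t"
  shows "theta2 s = (\<Sum>\<^sub>\<infinity>n. gauss_term t (2 * a * n + a))"
proof -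
  have s: "s = of_real (of_int (2 * a) ^ 2 / 6) * t"
    using assms by (simp add: field_simps)
  have exponent: "(of_int (2 * a) ^ 2 / 6 :: real) * ((of_int n + 1/2)\<^sup>2 / 2)
                    = of_int (2 * a * n + a) ^ 2 / 12" for n
    by (simp add: power2_eq_square field_simps)
  have "qpow s ((of_int n + 1/2)\<^sup>2 / 2) = gauss_term t (2 * a * n + a)" for n
    unfolding s qpow_of_real_mult gauss_term_def exponent ..
  then show ?thesis unfolding theta2_def by simp
qed

lemma theta3_rescale:
  assumes "6 * s = of_int a ^ 2 * t"
  shows "theta3 s = (\<Sum>\<^sub>\<infinity>n. gauss_term t (a * n))"
proof -
  have s: "s = of_real (of_int a ^ 2 / 6) * t"
    using assms by (simp add: field_simps)
  have exponent: "(of_int a ^ 2 / 6 :: real) * (of_int n ^ 2 / 2) = of_int (a * n) ^ 2 / 12" for n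
    by (simp add: power2_eq_square field_simps)
  have "qpow s (of_int n ^ 2 / 2) = gauss_term t (a * n)" for n
    unfolding s qpow_of_real_mult gauss_term_def exponent ..
  then show ?thesis unfolding theta3_def by simp
qed

lemma theta4_rescale:
  assumes "6 * s = of_int a ^ 2 * t"
  shows "theta4 s = (\<Sum>\<^sub>\<infinity>n. alt_sign n * gauss_term t (a * n))"
proof -
  have s: "s = of_real (of_int a ^ 2 / 6) * t"
    using assms by (simp add: field_simps)
  have exponent: "(of_int a ^ 2 / 6 :: real) * (of_int n ^ 2 / 2) = of_int (a * n) ^ 2 / 12" for n
    by (simp add: power2_eq_square field_simps)
  have "qpow s (of_int n ^ 2 / 2) = gauss_term t (a * n)" for n
    unfolding s qpow_of_real_mult gauss_term_def exponent ..
  then show ?thesis unfolding theta4_def minus_one_power_nat_abs by simp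
qed

fun lattice_coeff :: "int \<times> int \<Rightarrow> complex" where
  "lattice_coeff (u, v) = (if 3 dvd v \<and> odd (u + v) then alt_sign v else 0)"

fun lattice_term :: "complex \<Rightarrow> int \<times> int \<Rightarrow> complex" where
  "lattice_term t (u, v) = gauss_term t u * gauss_term t v"

definition lattice_sum :: "complex \<Rightarrow> complex" where
  "lattice_sum t = (\<Sum>\<^sub>\<infinity>z. lattice_coeff z * lattice_term t z)"

lemma summable_lattice_term:
  assumes "Im t > 0"
  shows "lattice_term t summable_on UNIV"
proof -
  have "(gauss_term t has_sum (\<Sum>\<^sub>\<infinity>n. gauss_term t n)) UNIV"
    using has_sum_gauss_term[OF assms, of 1 0] by simp
  from has_sum_product[OF this this]
  have "(\<lambda>(u, v). gauss_term t u * gauss_term t v) summable_on UNIV"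
    by (auto simp: summable_on_def)
  moreover have "(\<lambda>(u, v). gauss_term t u * gauss_term t v) = lattice_term t" by auto
  ultimately show ?thesis by simp
qed

lemma summable_lattice_restriction:
  assumes "Im t > 0"
  shows "(\<lambda>z. if P z then lattice_coeff z * lattice_term t z else 0) summable_on UNIV"
proof -
  have "(\<lambda>z. (if P z then lattice_coeff z else 0) * lattice_term t z) summable_on UNIV"
    by (rule summable_on_bounded_mult[OF summable_lattice_term[OF assms], where B = 1])
       (auto simp: alt_sign_def)
  moreover have "(\<lambda>z. (if P z then lattice_coeff z else 0) * lattice_term t z)
                   = (\<lambda>z. if P z then lattice_coeff z * lattice_term t z else 0)" by auto
  ultimately show ?thesis by simp
qed

lemma has_sum_lattice_sum:
  assumes "Im t > 0"
  shows "((\<lambda>z. lattice_coeff z * lattice_term t z) has_sum lattice_sum t) UNIV"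
  using summable_lattice_restriction[OF assms, of "\<lambda>_. True"] unfolding lattice_sum_def by simp

lemma lattice_coeff_mod_six:
  "lattice_coeff (u, v)
     = (if u mod 2 = 1 \<and> v mod 6 = 0 then 1 else if u mod 2 = 0 \<and> v mod 6 = 3 then -1 else 0)"
proof -
  have "(u mod 2 = 1 \<and> v mod 6 = 0) \<or> (u mod 2 = 0 \<and> v mod 6 = 3) \<or> \<not> (3 dvd v \<and> odd (u + v))"
    by presburger
  then consider "u mod 2 = 1 \<and> v mod 6 = 0" | "u mod 2 = 0 \<and> v mod 6 = 3"
    | "\<not> (3 dvd v \<and> odd (u + v))"
    by blast
  then show ?thesis
  proof cases
    case 1
    then have "3 dvd v \<and> odd (u + v) \<and> even v" by presburger
    with 1 show ?thesis by (simp add: alt_sign_def)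
  next
    case 2
    then have "3 dvd v \<and> odd (u + v) \<and> odd v" by presburger
    with 2 show ?thesis by (simp add: alt_sign_def)
  next
    case 3
    then have "\<not> (u mod 2 = 1 \<and> v mod 6 = 0)" "\<not> (u mod 2 = 0 \<and> v mod 6 = 3)" by presburger+
    with 3 show ?thesis by auto
  qed
qed

lemma theta_difference_eq_lattice_sum:
  assumes "Im t > 0"
  shows "theta2 (2 * t / 3) * theta3 (6 * t) - theta3 (2 * t / 3) * theta2 (6 * t) = lattice_sum t"
proof -
  \<comment> \<open>The index maps keep their \<open>+ 0\<close> and \<open>1 *\<close> so that they match \<open>range_affine_pair\<close>.\<close>
  have "((\<lambda>z. if z \<in> range (\<lambda>(x, y). (2 * x + 1, 6 * y + 0)) then lattice_term t z else 0)
          has_sum (\<Sum>\<^sub>\<infinity>n. gauss_term t (2 * n + 1)) * (\<Sum>\<^sub>\<infinity>n. gauss_term t (6 * n + 0))) UNIV"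
    by (rule has_sum_product_reindex[OF has_sum_gauss_term has_sum_gauss_term inj_affine_pair])
       (use assms in simp_all)
  then have first: "((\<lambda>z. if fst z mod 2 = 1 \<and> snd z mod 6 = 0 then lattice_term t z else 0)
                       has_sum theta2 (2 * t / 3) * theta3 (6 * t)) UNIV"
    using range_affine_pair[of 1 2 0 6]
    by (simp add: theta2_rescale[of _ 1 t] theta3_rescale[of _ 6 t])
  have "((\<lambda>z. if z \<in> range (\<lambda>(x, y). (2 * x + 0, 6 * y + 3)) then lattice_term t z else 0)
          has_sum (\<Sum>\<^sub>\<infinity>n. gauss_term t (2 * n + 0)) * (\<Sum>\<^sub>\<infinity>n. gauss_term t (6 * n + 3))) UNIV"
    by (rule has_sum_product_reindex[OF has_sum_gauss_term has_sum_gauss_term inj_affine_pair])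
       (use assms in simp_all)
  then have second: "((\<lambda>z. if fst z mod 2 = 0 \<and> snd z mod 6 = 3 then lattice_term t z else 0)
                        has_sum theta3 (2 * t / 3) * theta2 (6 * t)) UNIV"
    using range_affine_pair[of 0 2 3 6]
    by (simp add: theta3_rescale[of _ 2 t] theta2_rescale[of _ 3 t])
  have "(if fst z mod 2 = 1 \<and> snd z mod 6 = 0 then lattice_term t z else 0)
          - (if fst z mod 2 = 0 \<and> snd z mod 6 = 3 then lattice_term t z else 0)
        = lattice_coeff z * lattice_term t z" for z
    by (cases z) (simp only: lattice_coeff_mod_six, auto)
  with has_sum_diff[OF first second] show ?thesis
    unfolding lattice_sum_def by (simp add: infsumI)
qed

lemma lattice_coeff_alt_sign_diff:
  "2 * lattice_coeff (u, v) = (if v mod 3 = 0 then alt_sign (v div 3) - alt_sign u else 0)"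
proof (cases "3 dvd v")
  case True
  then obtain w where "v = 3 * w" by blast
  then show ?thesis by (auto simp: alt_sign_def)
next
  case False
  then have "v mod 3 \<noteq> 0" by presburger
  with False show ?thesis by simp
qed

lemma theta_difference_eq_twice_lattice_sum:
  assumes "Im t > 0"
  shows "theta4 (3 * t / 2) * theta3 (t / 6) - theta3 (3 * t / 2) * theta4 (t / 6)
           = 2 * lattice_sum t"
proof -
  let ?h = "\<lambda>(x::int, y::int). (1 * x + 0, 3 * y + 0)"
  have "((\<lambda>z. if z \<in> range ?h then alt_sign (snd z div 3) * lattice_term t z else 0)
          has_sum (\<Sum>\<^sub>\<infinity>n. gauss_term t (1 * n + 0)) * (\<Sum>\<^sub>\<infinity>n. alt_sign n * gauss_term t (3 * n)))
          UNIV"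
    by (rule has_sum_product_reindex[OF has_sum_gauss_term
          has_sum_infsum[OF summable_signed_gauss_term] inj_affine_pair])
       (use assms in \<open>simp_all add: ac_simps\<close>)
  then have first: "((\<lambda>z. if snd z mod 3 = 0 then alt_sign (snd z div 3) * lattice_term t z else 0)
                       has_sum theta3 (t / 6) * theta4 (3 * t / 2)) UNIV"
    using range_affine_pair[of 0 1 0 3]
    by (simp add: theta3_rescale[of _ 1 t] theta4_rescale[of _ 3 t])
  have "((\<lambda>z. if z \<in> range ?h then alt_sign (fst z) * lattice_term t z else 0)
          has_sum (\<Sum>\<^sub>\<infinity>n. alt_sign n * gauss_term t (1 * n)) * (\<Sum>\<^sub>\<infinity>n. gauss_term t (3 * n + 0)))
          UNIV"
    by (rule has_sum_product_reindex[OF has_sum_infsum[OF summable_signed_gauss_term]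
          has_sum_gauss_term inj_affine_pair])
       (use assms in \<open>simp_all add: ac_simps\<close>)
  then have second: "((\<lambda>z. if snd z mod 3 = 0 then alt_sign (fst z) * lattice_term t z else 0)
                        has_sum theta4 (t / 6) * theta3 (3 * t / 2)) UNIV"
    using range_affine_pair[of 0 1 0 3]
    by (simp add: theta4_rescale[of _ 1 t] theta3_rescale[of _ 3 t])
  have "(if snd z mod 3 = 0 then alt_sign (snd z div 3) * lattice_term t z else 0)
          - (if snd z mod 3 = 0 then alt_sign (fst z) * lattice_term t z else 0)
        = 2 * (lattice_coeff z * lattice_term t z)" for z
    by (cases z) (simp only: mult.assoc[symmetric] lattice_coeff_alt_sign_diff,
        auto simp: left_diff_distrib)
  with has_sum_diff[OF first second]
  have "((\<lambda>z. 2 * (lattice_coeff z * lattice_term t z)) has_sum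
          theta3 (t / 6) * theta4 (3 * t / 2) - theta4 (t / 6) * theta3 (3 * t / 2)) UNIV"
    by simp
  from has_sum_unique[OF this has_sum_cmult_right[OF has_sum_lattice_sum[OF assms]]]
  show ?thesis by (simp add: ac_simps)
qed

lemma lattice_sum_residue_zero:
  assumes "Im t > 0"
  shows "((\<lambda>z. if fst z mod 3 = 0 then lattice_coeff z * lattice_term t z else 0) has_sum 0) UNIV"
proof -
  define w where "w z = (if fst z mod 3 = 0 then lattice_coeff z * lattice_term t z else 0)" for z
  have antisymmetric: "w (prod.swap z) = - w z" for z
  proof -
    obtain u v where z: "z = (u, v)" by fastforce
    show ?thesis
    proof (cases "3 dvd u \<and> 3 dvd v \<and> odd (u + v)")
      case True
      then have "alt_sign u = - alt_sign v" by (auto simp: alt_sign_def)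
      with True show ?thesis by (simp add: z w_def mult.commute add.commute)
    next
      case False
      then show ?thesis by (auto simp: z w_def add.commute)
    qed
  qed
  have "w summable_on UNIV"
    unfolding w_def by (rule summable_lattice_restriction[OF assms])
  have "infsum w UNIV = infsum (\<lambda>z. w (prod.swap z)) UNIV"
    by (rule infsum_reindex_bij_betw[symmetric]) simp
  also have "\<dots> = - infsum w UNIV"
    unfolding antisymmetric by (rule infsum_uminus)
  finally have "infsum w UNIV = 0" by simp
  then show ?thesis
    using has_sum_infsum[OF \<open>w summable_on UNIV\<close>] unfolding w_def by simp
qed

lemma eta_terms_mult_eq_lattice:
  "alt_sign j * qpow t ((6 * of_int j + 1)\<^sup>2 / 24) * (alt_sign k * qpow t ((6 * of_int k + 1)\<^sup>2 / 24))
     = lattice_coeff (3 * (j + k) + 1, 3 * (j - k)) * lattice_term t (3 * (j + k) + 1, 3 * (j - k))"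
proof -
  have exponent: "of_int (3 * (j + k) + 1) ^ 2 / 12 + of_int (3 * (j - k)) ^ 2 / 12
                    = (6 * of_int j + 1)\<^sup>2 / 24 + (6 * of_int k + 1 :: real)\<^sup>2 / 24"
    by (simp add: power2_eq_square field_simps)
  have "lattice_term t (3 * (j + k) + 1, 3 * (j - k))
          = qpow t (of_int (3 * (j + k) + 1) ^ 2 / 12 + of_int (3 * (j - k)) ^ 2 / 12)"
    by (simp add: gauss_term_def qpow_add)
  also have "\<dots> = qpow t ((6 * of_int j + 1)\<^sup>2 / 24) * qpow t ((6 * of_int k + 1)\<^sup>2 / 24)"
    unfolding exponent by (rule qpow_add)
  finally have "lattice_term t (3 * (j + k) + 1, 3 * (j - k)) = \<dots>" .
  moreover have "lattice_coeff (3 * (j + k) + 1, 3 * (j - k)) = alt_sign j * alt_sign k"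
    by (auto simp: alt_sign_def)
  ultimately show ?thesis by (simp add: mult_ac)
qed

lemma range_eta_pair_index:
  assumes "lattice_coeff z \<noteq> 0"
  shows "z \<in> range (\<lambda>(j, k). (3 * (j + k) + 1, 3 * (j - k))) \<longleftrightarrow> fst z mod 3 = 1"
proof
  assume "z \<in> range (\<lambda>(j, k). (3 * (j + k) + 1, 3 * (j - k)))"
  then show "fst z mod 3 = 1" by (auto; presburger)
next
  assume residue: "fst z mod 3 = 1"
  obtain u v where z: "z = (u, v)" by fastforce
  from assms have "3 dvd v" "odd (u + v)" by (auto simp: z split: if_splits)
  then obtain d where d: "v = 3 * d" by blast
  have "u mod 3 = 1" using residue by (simp add: z)
  then have u: "u = 3 * (u div 3) + 1" by presburger
  have "even (u div 3 + d)" using \<open>odd (u + v)\<close> u d by presburger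
  then obtain m where "u div 3 + d = 2 * m" by blast
  then have "z = (\<lambda>(j, k). (3 * (j + k) + 1, 3 * (j - k))) (m, m - d)" using u d by (simp add: z)
  then show "z \<in> range (\<lambda>(j, k). (3 * (j + k) + 1, 3 * (j - k)))" by (rule range_eqI)
qed

lemma lattice_sum_residue_one:
  assumes "Im t > 0"
  shows "((\<lambda>z. if fst z mod 3 = 1 then lattice_coeff z * lattice_term t z else 0)
           has_sum dedekind_eta t ^ 2) UNIV"
proof -
  let ?h = "\<lambda>(j::int, k::int). (3 * (j + k) + 1, 3 * (j - k))"
  have "inj ?h" by (auto simp: inj_def)
  have "((\<lambda>z. if z \<in> range ?h then lattice_coeff z * lattice_term t z else 0)
          has_sum dedekind_eta t * dedekind_eta t) UNIV"
    by (rule has_sum_product_reindex[OF dedekind_eta_pentagonal[OF assms]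
          dedekind_eta_pentagonal[OF assms] \<open>inj ?h\<close>])
       (simp add: eta_terms_mult_eq_lattice)
  moreover have "(if z \<in> range ?h then lattice_coeff z * lattice_term t z else 0)
                   = (if fst z mod 3 = 1 then lattice_coeff z * lattice_term t z else 0)" for z
    using range_eta_pair_index[of z] by (cases "lattice_coeff z = 0") simp_all
  ultimately show ?thesis by (simp add: power2_eq_square)
qed

lemma lattice_sum_eq_eta_squared:
  assumes "Im t > 0"
  shows "lattice_sum t = 2 * dedekind_eta t ^ 2"
proof -
  define part where
    "part r = (\<lambda>z. if fst z mod 3 = r then lattice_coeff z * lattice_term t z else 0)" for r
  define reflect :: "int \<times> int \<Rightarrow> int \<times> int" where "reflect z = (- fst z, snd z)" for z
  have "bij reflect" by (rule o_bij[where g = reflect]) (auto simp: reflect_def)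
  have part0: "(part 0 has_sum 0) UNIV"
    using lattice_sum_residue_zero[OF assms] by (simp add: part_def)
  have part1: "(part 1 has_sum dedekind_eta t ^ 2) UNIV"
    using lattice_sum_residue_one[OF assms] by (simp add: part_def)
  have reflected: "part 1 (reflect z) = part 2 z" for z
  proof -
    obtain u v where z: "z = (u, v)" by fastforce
    have "(- u) mod 3 = 1 \<longleftrightarrow> u mod 3 = 2" by presburger
    then show ?thesis by (simp add: part_def reflect_def z)
  qed
  have "((\<lambda>z. part 1 (reflect z)) has_sum dedekind_eta t ^ 2) UNIV"
    using has_sum_reindex_bij_betw[OF \<open>bij reflect\<close>, of "part 1"] part1 by simp
  then have part2: "(part 2 has_sum dedekind_eta t ^ 2) UNIV"
    unfolding reflected .
  from part0 part1 part2
  have "((\<lambda>z. part 0 z + part 1 z + part 2 z)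
          has_sum 0 + dedekind_eta t ^ 2 + dedekind_eta t ^ 2) UNIV"
    by (intro has_sum_add)
  moreover have "part 0 z + part 1 z + part 2 z = lattice_coeff z * lattice_term t z" for z
  proof -
    have "fst z mod 3 = 0 \<or> fst z mod 3 = 1 \<or> fst z mod 3 = 2" by presburger
    then show ?thesis by (auto simp: part_def)
  qed
  ultimately show ?thesis
    using has_sum_lattice_sum[OF assms] has_sum_unique by fastforce
qed

theorem lemma132:
  fixes \<tau> :: complex
  assumes "Im \<tau> > 0"
  shows "theta2 (2 * \<tau> / 3) * theta3 (6 * \<tau>) - theta3 (2 * \<tau> / 3) * theta2 (6 * \<tau>)
           = 2 * (dedekind_eta \<tau>)^2 \<and>
         theta4 (3 * \<tau> / 2) * theta3 (\<tau> / 6) - theta3 (3 * \<tau> / 2) * theta4 (\<tau> / 6)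
           = 4 * (dedekind_eta \<tau>)^2"
  using theta_difference_eq_lattice_sum[OF assms] theta_difference_eq_twice_lattice_sum[OF assms]
    lattice_sum_eq_eta_squared[OF assms]
  by simp

end
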